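(* Let $B\ge 2$ and $\eta\in\mathbb{N}$. Then $\mathcal{H}_B(\gamma_B(\eta+1))\le\gamma_B(\eta)+4(B-1)^2$.
   Context: Fix an integer base $B \geq 2$. Every integer $x>0$ is written uniquely as $x=\sum_{i=0}^{L(x)-1} x_i B^i$ with digits $0 \le x_i \le B-1$ and $x_{L(x)-1}\neq 0$. Define $\mathcal{H}_B(x)=\sum_{i=0}^{L(x)-1} x_i^2$, $\mathcal{H}_B(0)=0$, $\mathcal{H}_B^0(x)=x$, $\mathcal{H}_B^{n}=\mathcal{H}_B\circ\mathcal{H}_B^{n-1}$. A positive integer $x$ is happy if $\mathcal{H}_B^n(x)=1$ for some $n\in\mathbb{N}$; its height is $\eta_B(x)=\min\{\alpha\in\mathbb{N}:\mathcal{H}_B^\alpha(x)=1\}$. For $n\in\mathbb{N}$, $\gamma_B(n)$ denotes the smallest happy number $x\ge 1$ with $\eta_B(x)=n$. *)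

theory Defs
  imports Main
begin

text \<open>Sum of the squares of the base-B digits of x (H_B). For B < 2 it is set to 0
  (irrelevant: the theorem assumes B \<ge> 2).\<close>
function happyH :: "nat \<Rightarrow> nat \<Rightarrow> nat" where
  "happyH B x = (if x = 0 \<or> B < 2 then 0 else (x mod B)^2 + happyH B (x div B))"
  by pat_completeness auto
termination
  by (relation "measure (\<lambda>(B, x). x)") auto

definition happy :: "nat \<Rightarrow> nat \<Rightarrow> bool" where
  "happy B x \<longleftrightarrow> x > 0 \<and> (\<exists>n. (happyH B ^^ n) x = 1)"

definition height :: "nat \<Rightarrow> nat \<Rightarrow> nat" where
  "height B x = (LEAST a. (happyH B ^^ a) x = 1)"

definition gamma :: "nat \<Rightarrow> nat \<Rightarrow> nat" where
  "gamma B n = (LEAST x. x \<ge> 1 \<and> happy B x \<and> height B x = n)"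

end

theory Submission
  imports Defs "HOL-Computational_Algebra.Primes"
begin

text \<open>Let \<open>c = (B - 1)\<^sup>2\<close> and write \<open>\<gamma>\<^sub>B(\<eta>) = q c + r\<close> with \<open>r < c\<close>. By Lagrange's
  four-square theorem \<open>r\<close> is a sum of four squares of digits below \<open>B - 1\<close>, so
  \<open>\<gamma>\<^sub>B(\<eta>) = \<H>\<^sub>B(z)\<close> for a number \<open>z\<close> with \<open>q + 4\<close> digits (four small digits and \<open>q\<close>
  digits \<open>B - 1\<close>); as \<open>z \<noteq> 1\<close> can be arranged, \<open>z\<close> is happy of height \<open>\<eta> + 1\<close>, so
  \<open>\<gamma>\<^sub>B(\<eta> + 1) \<le> z < B\<^sup>q\<^sup>+\<^sup>4\<close>. Hence \<open>\<gamma>\<^sub>B(\<eta> + 1)\<close> has at most \<open>q + 4\<close> digits, and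
  \<open>\<H>\<^sub>B(\<gamma>\<^sub>B(\<eta> + 1)) \<le> (q + 4) c \<le> \<gamma>\<^sub>B(\<eta>) + 4 c\<close>.
  Lagrange's theorem is proved by Euler's descent.\<close>

definition sum_four_squares :: "int \<Rightarrow> bool" where
  "sum_four_squares n \<longleftrightarrow> (\<exists>a b c d. n = a^2 + b^2 + c^2 + d^2)"

lemma euler_four_squares_identity:
  "((a::'a::comm_ring_1)^2 + b^2 + c^2 + d^2) * (w^2 + x^2 + y^2 + z^2) =
    (a*w + b*x + c*y + d*z)^2 + (a*x - b*w + c*z - d*y)^2 +
    (a*y - b*z - c*w + d*x)^2 + (a*z + b*y - c*x - d*w)^2"
  by (simp add: power2_eq_square algebra_simps)

lemma sum_four_squares_mult:
  assumes "sum_four_squares m" "sum_four_squares n"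
  shows "sum_four_squares (m * n)"
  using assms euler_four_squares_identity unfolding sum_four_squares_def by metis

lemma exists_centered_residue:
  fixes m x :: int assumes "m > 0" shows "\<exists>t. \<bar>2 * (x - m * t)\<bar> \<le> m"
proof
  define h u where "h = m div 2" and "u = (x + h) mod m"
  have "0 \<le> u" "u < m"
    unfolding u_def using assms by simp_all
  moreover have "m \<le> 2 * h + 1" "2 * h \<le> m"
    unfolding h_def by linarith+
  ultimately have "\<bar>2 * (u - h)\<bar> \<le> m"
    by (simp add: abs_le_iff)
  moreover have "x - m * ((x + h) div m) = u - h"
    unfolding u_def by (simp add: minus_div_mult_eq_mod [symmetric])
  ultimately show "\<bar>2 * (x - m * ((x + h) div m))\<bar> \<le> m"
    by simp
qed

lemma sum_four_squares_descent_product: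
  fixes m p x1 x2 x3 x4 t1 t2 t3 t4 :: int
  assumes xs: "m * p = x1^2 + x2^2 + x3^2 + x4^2" and "m \<noteq> 0"
  shows "\<exists>r. (x1 - m*t1)^2 + (x2 - m*t2)^2 + (x3 - m*t3)^2 + (x4 - m*t4)^2 = m * r
           \<and> sum_four_squares (r * p)"
proof (intro exI conjI)
  define y1 y2 y3 y4 where
    "y1 = x1 - m*t1" and "y2 = x2 - m*t2" and "y3 = x3 - m*t3" and "y4 = x4 - m*t4"
  define r where "r = p - 2 * (x1*t1 + x2*t2 + x3*t3 + x4*t4) + m * (t1^2 + t2^2 + t3^2 + t4^2)"
  show r: "y1^2 + y2^2 + y3^2 + y4^2 = m * r"
    unfolding y1_def y2_def y3_def y4_def r_def using xs by algebra
  define w1 w2 w3 w4 where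
    "w1 = p - (x1*t1 + x2*t2 + x3*t3 + x4*t4)"
    and "w2 = x2*t1 - x1*t2 + x4*t3 - x3*t4"
    and "w3 = x3*t1 - x1*t3 + x2*t4 - x4*t2"
    and "w4 = x4*t1 - x1*t4 + x3*t2 - x2*t3"
  text \<open>Since \<open>y\<^sub>i \<equiv> x\<^sub>i (mod m)\<close>, each of the four terms of Euler's identity for
    \<open>(\<Sum>x\<^sub>i\<^sup>2)(\<Sum>y\<^sub>i\<^sup>2)\<close> is divisible by \<open>m\<close>.\<close>
  have "x1*y1 + x2*y2 + x3*y3 + x4*y4 = m * w1"
    unfolding y1_def y2_def y3_def y4_def w1_def using xs by algebra
  moreover have "x1*y2 - x2*y1 + x3*y4 - x4*y3 = m * w2"
    unfolding y1_def y2_def y3_def y4_def w2_def by algebra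
  moreover have "x1*y3 - x2*y4 - x3*y1 + x4*y2 = m * w3"
    unfolding y1_def y2_def y3_def y4_def w3_def by algebra
  moreover have "x1*y4 + x2*y3 - x3*y2 - x4*y1 = m * w4"
    unfolding y1_def y2_def y3_def y4_def w4_def by algebra
  ultimately have "(m * p) * (m * r) = (m*w1)^2 + (m*w2)^2 + (m*w3)^2 + (m*w4)^2"
    unfolding xs r[symmetric] by (metis euler_four_squares_identity)
  then have "m^2 * (r * p) = m^2 * (w1^2 + w2^2 + w3^2 + w4^2)"
    by algebra
  then show "sum_four_squares (r * p)"
    using \<open>m \<noteq> 0\<close> unfolding sum_four_squares_def by auto
qed

lemma dvd_of_sum_four_squares_multiples:
  fixes m p t1 t2 t3 t4 :: int
  assumes "m * p = (m*t1)^2 + (m*t2)^2 + (m*t3)^2 + (m*t4)^2" and "m \<noteq> 0"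
  shows "m dvd p"
proof
  from assms(1) have "m * p = m * (m * (t1^2 + t2^2 + t3^2 + t4^2))"
    by algebra
  then show "p = m * (t1^2 + t2^2 + t3^2 + t4^2)"
    using \<open>m \<noteq> 0\<close> by simp
qed

lemma dvd_of_sum_four_squares_half_residues:
  fixes m p x1 x2 x3 x4 t1 t2 t3 t4 :: int
  assumes xs: "m * p = x1^2 + x2^2 + x3^2 + x4^2" and "m \<noteq> 0"
    and "(2 * (x1 - m * t1))^2 = m^2" "(2 * (x2 - m * t2))^2 = m^2"
    and "(2 * (x3 - m * t3))^2 = m^2" "(2 * (x4 - m * t4))^2 = m^2"
  shows "m dvd p"
proof -
  have unit: "\<exists>c. 2 * x = m * (c + 2 * t) \<and> c^2 = 1" if "(2 * (x - m * t))^2 = m^2" for x t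
  proof -
    from that have "2 * (x - m * t) = m \<or> 2 * (x - m * t) = - m"
      using power2_eq_iff by blast
    then show ?thesis
      by (auto intro: exI[of _ 1] exI[of _ "-1"] simp: algebra_simps)
  qed
  obtain c1 c2 c3 c4 where
    c: "2 * x1 = m * (c1 + 2 * t1)" "2 * x2 = m * (c2 + 2 * t2)"
       "2 * x3 = m * (c3 + 2 * t3)" "2 * x4 = m * (c4 + 2 * t4)"
       "c1^2 = 1" "c2^2 = 1" "c3^2 = 1" "c4^2 = 1"
    using unit assms(3-6) by metis
  have "4 * (m * p) = 4 * (m * (m * (1 + c1*t1 + c2*t2 + c3*t3 + c4*t4 + t1^2 + t2^2 + t3^2 + t4^2)))"
    using xs c by algebra
  then have "p = m * (1 + c1*t1 + c2*t2 + c3*t3 + c4*t4 + t1^2 + t2^2 + t3^2 + t4^2)"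
    using \<open>m \<noteq> 0\<close> by simp
  then show ?thesis ..
qed

lemma prime_sum_four_squares_descent:
  fixes p m :: int
  assumes p: "prime p" and m: "1 < m" "m < p" and "sum_four_squares (m * p)"
  shows "\<exists>r. 0 < r \<and> r < m \<and> sum_four_squares (r * p)"
proof -
  obtain x1 x2 x3 x4 where xs: "m * p = x1^2 + x2^2 + x3^2 + x4^2"
    using assms(4) unfolding sum_four_squares_def by blast
  have "m \<noteq> 0" "m > 0" using m by simp_all
  obtain t1 t2 t3 t4 where
    "\<bar>2 * (x1 - m*t1)\<bar> \<le> m" "\<bar>2 * (x2 - m*t2)\<bar> \<le> m"
    "\<bar>2 * (x3 - m*t3)\<bar> \<le> m" "\<bar>2 * (x4 - m*t4)\<bar> \<le> m"
    using exists_centered_residue[OF \<open>m > 0\<close>] by metis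
  then have small: "(2 * (x1 - m*t1))^2 \<le> m^2" "(2 * (x2 - m*t2))^2 \<le> m^2"
    "(2 * (x3 - m*t3))^2 \<le> m^2" "(2 * (x4 - m*t4))^2 \<le> m^2"
    using \<open>m > 0\<close> by (simp_all add: abs_le_square_iff[symmetric])
  obtain r where r: "(x1 - m*t1)^2 + (x2 - m*t2)^2 + (x3 - m*t3)^2 + (x4 - m*t4)^2 = m * r"
    and rp: "sum_four_squares (r * p)"
    using sum_four_squares_descent_product[OF xs \<open>m \<noteq> 0\<close>] by blast
  have four_r: "4 * (m * r) = (2 * (x1 - m*t1))^2 + (2 * (x2 - m*t2))^2
      + (2 * (x3 - m*t3))^2 + (2 * (x4 - m*t4))^2"
    unfolding r[symmetric] by algebra
  have not_dvd: "\<not> m dvd p"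
    using prime_int_not_dvd[OF p m(2,1)] .
  have "0 \<le> m * r"
    unfolding r[symmetric] by simp
  then have "0 \<le> r"
    using \<open>m > 0\<close> by (simp add: zero_le_mult_iff)
  have "m * r \<le> m * m"
    using four_r small by (simp add: power2_eq_square)
  then have "r \<le> m"
    using \<open>m > 0\<close> by simp
  moreover have "r \<noteq> 0"
  proof
    assume "r = 0"
    then have "x1 = m*t1" "x2 = m*t2" "x3 = m*t3" "x4 = m*t4"
      using r by (simp_all add: sum_power2_eq_zero_iff add_nonneg_eq_0_iff)
    then show False
      using dvd_of_sum_four_squares_multiples[of m p t1 t2 t3 t4] xs \<open>m \<noteq> 0\<close> not_dvd
      by simp
  qed
  moreover have "r \<noteq> m"
  proof
    assume "r = m"
    then have "(2 * (x1 - m*t1))^2 = m^2" "(2 * (x2 - m*t2))^2 = m^2"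
      "(2 * (x3 - m*t3))^2 = m^2" "(2 * (x4 - m*t4))^2 = m^2"
      using four_r small by (simp_all add: power2_eq_square)
    then show False
      using dvd_of_sum_four_squares_half_residues[OF xs \<open>m \<noteq> 0\<close>] not_dvd by blast
  qed
  ultimately show ?thesis
    using \<open>0 \<le> r\<close> rp by (intro exI[of _ r]) simp
qed

lemma prime_sum_four_squares_of_multiple:
  fixes p m :: int
  assumes p: "prime p" and "0 < m" "m < p" "sum_four_squares (m * p)"
  shows "sum_four_squares p"
  using assms(2-4)
proof (induction "nat m" arbitrary: m rule: less_induct)
  case less
  show ?case
  proof (cases "m = 1")
    case True
    then show ?thesis using less.prems by simp
  next
    case False
    then obtain r where "0 < r" "r < m" "sum_four_squares (r * p)"
      using prime_sum_four_squares_descent[OF p _ less.prems(2,3)] less.prems(1) by auto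
    then show ?thesis
      using less.hyps[of r] less.prems by auto
  qed
qed

lemma dvd_abs_less_imp_zero:
  fixes p n :: int
  assumes "p dvd n" "\<bar>n\<bar> < p"
  shows "n = 0"
proof (rule ccontr)
  assume "n \<noteq> 0"
  then have "\<bar>p\<bar> \<le> \<bar>n\<bar>"
    using assms(1) by (rule dvd_imp_le_int)
  then show False
    using assms(2) by linarith
qed

lemma prime_dvd_diff_squares_imp_eq:
  fixes p a b :: int
  assumes p: "prime p" and "0 \<le> a" "0 \<le> b" "2 * a < p" "2 * b < p"
    and "p dvd a^2 - b^2"
  shows "a = b"
proof -
  have "a^2 - b^2 = (a - b) * (a + b)"
    by algebra
  then have "p dvd a - b \<or> p dvd a + b"
    using assms(6) by (simp add: prime_dvd_mult_iff[OF p])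
  moreover have "\<bar>a - b\<bar> < p" "\<bar>a + b\<bar> < p"
    using assms(2-5) by auto
  ultimately have "a - b = 0 \<or> a + b = 0"
    using dvd_abs_less_imp_zero by blast
  then show ?thesis
    using assms(2,3) by linarith
qed

lemma prime_dvd_sum_two_squares_plus_one:
  fixes p :: int assumes p: "prime p" and "p > 2"
  shows "\<exists>a b. 0 \<le> a \<and> 2 * a < p \<and> 0 \<le> b \<and> 2 * b < p \<and> p dvd a^2 + b^2 + 1"
proof -
  obtain k where k: "p = 2 * k + 1"
    using prime_odd_int[OF p \<open>p > 2\<close>] by (meson oddE)
  define squares where "squares = (\<lambda>a. a^2 mod p) ` {0..k}"
  define others where "others = (\<lambda>b. (- 1 - b^2) mod p) ` {0..k}"
  have "inj_on (\<lambda>a. a^2 mod p) {0..k}"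
    by (rule inj_onI) (use prime_dvd_diff_squares_imp_eq[OF p] k in \<open>auto simp: mod_eq_dvd_iff\<close>)
  then have card_squares: "card squares = nat (k + 1)"
    unfolding squares_def using card_image by fastforce
  have "inj_on (\<lambda>b. (- 1 - b^2) mod p) {0..k}"
  proof (rule inj_onI)
    fix a b assume ab: "a \<in> {0..k}" "b \<in> {0..k}" "(- 1 - a^2) mod p = (- 1 - b^2) mod p"
    then have "p dvd b^2 - a^2"
      by (simp add: mod_eq_dvd_iff)
    then show "a = b"
      using prime_dvd_diff_squares_imp_eq[OF p, of b a] ab k by auto
  qed
  then have card_others: "card others = nat (k + 1)"
    unfolding others_def using card_image by fastforce
  have "card (squares \<union> others) \<le> card {0..<p}"
    unfolding squares_def others_def using prime_gt_0_int[OF p] by (intro card_mono) auto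
  then have "card (squares \<union> others) < card squares + card others"
    using card_squares card_others k \<open>p > 2\<close> by simp
  then have "squares \<inter> others \<noteq> {}"
    using card_Un_disjoint[of squares others] unfolding squares_def others_def by auto
  then obtain a b where ab: "a \<in> {0..k}" "b \<in> {0..k}" "a^2 mod p = (- 1 - b^2) mod p"
    unfolding squares_def others_def by blast
  then have "p dvd a^2 - (- 1 - b^2)"
    by (simp add: mod_eq_dvd_iff)
  then show ?thesis
    using ab k by (intro exI[of _ a] exI[of _ b]) (auto simp: algebra_simps)
qed

lemma sum_four_squares_prime:
  fixes p :: int assumes p: "prime p" shows "sum_four_squares p"
proof (cases "p = 2")
  case True
  have "(2::int) = 1^2 + 1^2 + 0^2 + 0^2" by simp
  then show ?thesis unfolding True sum_four_squares_def by blast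
next
  case False
  then have "p > 2" using prime_ge_2_int[OF p] by simp
  obtain a b where ab: "0 \<le> a" "2 * a < p" "0 \<le> b" "2 * b < p" "p dvd a^2 + b^2 + 1"
    using prime_dvd_sum_two_squares_plus_one[OF p \<open>p > 2\<close>] by blast
  then obtain m0 where m0: "a^2 + b^2 + 1 = p * m0" by blast
  have "(2 * a)^2 < p^2" "(2 * b)^2 < p^2"
    using ab by (intro power_strict_mono; simp)+
  moreover have "2^2 < p^2"
    using \<open>p > 2\<close> by (intro power_strict_mono) auto
  moreover have "4 * (p * m0) = (2 * a)^2 + (2 * b)^2 + 4"
    unfolding m0[symmetric] by algebra
  ultimately have "4 * (p * m0) < 4 * (p * p)"
    by (simp add: power2_eq_square)
  then have "m0 < p"
    using \<open>p > 2\<close> by simp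
  have "0 < p * m0"
    unfolding m0[symmetric] by (simp add: add_nonneg_pos)
  then have "0 < m0"
    using \<open>p > 2\<close> by (simp add: zero_less_mult_iff)
  moreover have "sum_four_squares (m0 * p)"
    unfolding sum_four_squares_def
    by (rule exI[of _ a], rule exI[of _ b], rule exI[of _ 1], rule exI[of _ 0])
      (simp add: m0 mult.commute)
  ultimately show ?thesis
    using prime_sum_four_squares_of_multiple[OF p] \<open>m0 < p\<close> by blast
qed

lemma sum_four_squares_of_nat: "sum_four_squares (int n)"
proof (induction n rule: less_induct)
  case (less n)
  show ?case
  proof (cases "n \<le> 1")
    case True
    then have "int n = (int n)^2 + 0^2 + 0^2 + 0^2" by (cases n) auto
    then show ?thesis unfolding sum_four_squares_def by blast
  next
    case False
    then obtain p k where p: "prime p" "n = p * k"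
      using prime_factor_nat[of n] by (auto elim: dvdE)
    then have "k < n"
      using False prime_gt_1_nat[OF p(1)] n_less_m_mult_n[of k p] by (cases "k = 0") auto
    then have "sum_four_squares (int k)"
      using less by blast
    moreover have "sum_four_squares (int p)"
      using p(1) sum_four_squares_prime by simp
    ultimately show ?thesis
      using p(2) sum_four_squares_mult by simp
  qed
qed

theorem four_squares_nat: "\<exists>a b c d :: nat. n = a^2 + b^2 + c^2 + d^2"
proof -
  obtain a b c d where "int n = a^2 + b^2 + c^2 + d^2"
    using sum_four_squares_of_nat unfolding sum_four_squares_def by blast
  then have "int n = int ((nat \<bar>a\<bar>)^2 + (nat \<bar>b\<bar>)^2 + (nat \<bar>c\<bar>)^2 + (nat \<bar>d\<bar>)^2)"
    by simp
  then have "n = (nat \<bar>a\<bar>)^2 + (nat \<bar>b\<bar>)^2 + (nat \<bar>c\<bar>)^2 + (nat \<bar>d\<bar>)^2"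
    by (simp only: of_nat_eq_iff)
  then show ?thesis by blast
qed

declare happyH.simps [simp del]

lemma happyH_0 [simp]: "happyH B 0 = 0"
  by (simp add: happyH.simps)

lemma happyH_eq: "B \<ge> 2 \<Longrightarrow> happyH B x = (x mod B)^2 + happyH B (x div B)"
  by (cases "x = 0") (simp_all add: happyH.simps[of B x])

lemma happyH_1: "B \<ge> 2 \<Longrightarrow> happyH B 1 = 1"
  using happyH_eq[of B 1] by simp

lemma happyH_base: "B \<ge> 2 \<Longrightarrow> happyH B B = 1"
  using happyH_eq[of B B] happyH_1[of B] by simp

lemma happyH_horner_sum:
  assumes "B \<ge> 2" "\<forall>d \<in> set ds. d < B"
  shows "happyH B (horner_sum id B ds) = (\<Sum>d \<leftarrow> ds. d^2)"
  using assms(2)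
proof (induction ds)
  case (Cons d ds)
  then have "(d + B * horner_sum id B ds) mod B = d"
    and "(d + B * horner_sum id B ds) div B = horner_sum id B ds"
    by simp_all
  then show ?case
    using Cons happyH_eq[OF assms(1), of "d + B * horner_sum id B ds"] by (simp add: id_def)
qed simp

lemma horner_sum_less_power:
  fixes B :: nat
  assumes "\<forall>d \<in> set ds. d < B"
  shows "horner_sum id B ds < B ^ length ds"
  using assms
proof (induction ds)
  case (Cons d ds)
  then have "horner_sum id B ds + 1 \<le> B ^ length ds" "d < B"
    by (auto simp: id_def)
  then have "d + B * horner_sum id B ds < B * (horner_sum id B ds + 1)"
    by simp
  also have "\<dots> \<le> B * B ^ length ds"
    using \<open>horner_sum id B ds + 1 \<le> B ^ length ds\<close> by (rule mult_left_mono) simp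
  finally show ?case
    by (simp add: id_def)
qed simp

lemma happyH_le_of_less_power:
  assumes "B \<ge> 2" "x < B ^ k"
  shows "happyH B x \<le> k * (B - 1)^2"
  using assms(2)
proof (induction k arbitrary: x)
  case (Suc k)
  have "x mod B \<le> B - 1"
    using assms(1) by (simp add: less_Suc_eq_le[symmetric])
  then have "(x mod B)^2 \<le> (B - 1)^2"
    by (rule power_mono) simp
  moreover have "x div B < B ^ k"
    using Suc.prems assms(1) by (simp add: div_less_iff_less_mult mult.commute)
  then have "happyH B (x div B) \<le> k * (B - 1)^2"
    by (rule Suc.IH)
  ultimately have "(x mod B)^2 + happyH B (x div B) \<le> (B - 1)^2 + k * (B - 1)^2"
    by (rule add_mono)
  then show ?case
    using happyH_eq[OF assms(1), of x] by simp
qed simp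

lemma happy_height_Suc_of_happyH_eq:
  assumes g: "happy B g" "height B g = n" and z: "happyH B z = g" "z \<noteq> 1"
  shows "happy B z \<and> height B z = Suc n"
proof -
  have "g > 0" and ex: "\<exists>k. (happyH B ^^ k) g = 1"
    using g(1) unfolding happy_def by auto
  have gn: "(happyH B ^^ n) g = 1"
    using LeastI_ex[OF ex] g(2) unfolding height_def by simp
  have least: "n \<le> k" if "(happyH B ^^ k) g = 1" for k
    unfolding g(2)[symmetric] height_def by (rule Least_le) (rule that)
  have shift: "(happyH B ^^ Suc k) z = (happyH B ^^ k) g" for k
    unfolding z(1)[symmetric] by (simp only: funpow_Suc_right comp_def)
  have "z > 0"
    using z(1) \<open>g > 0\<close> by (cases z) auto
  have "height B z = Suc n"
    unfolding height_def
  proof (rule Least_equality)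
    show "(happyH B ^^ Suc n) z = 1"
      using gn shift by simp
  next
    fix k assume k: "(happyH B ^^ k) z = 1"
    show "Suc n \<le> k"
    proof (cases k)
      case 0
      then show ?thesis using k z(2) by simp
    next
      case (Suc k')
      then show ?thesis using k shift least by simp
    qed
  qed
  moreover have "happy B z"
    unfolding happy_def using \<open>z > 0\<close> gn shift by (auto intro: exI[of _ "Suc n"])
  ultimately show ?thesis by blast
qed

lemma exists_happyH_preimage:
  assumes "B \<ge> 2"
  shows "\<exists>z. z \<noteq> 1 \<and> happyH B z = g \<and> z < B ^ (g div (B - 1)^2 + 4)"
proof -
  define c q r where "c = (B - 1)^2" and "q = g div c" and "r = g mod c"
  have "c > 0"
    unfolding c_def using assms by simp
  obtain a1 a2 a3 a4 :: nat where r: "r = a1^2 + a2^2 + a3^2 + a4^2"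
    using four_squares_nat by blast
  have digit: "t < B" if "t^2 \<le> r" for t
  proof -
    have "t^2 < (B - 1)^2"
      using that \<open>c > 0\<close> unfolding r_def c_def by (meson mod_less_divisor order.strict_trans1)
    then show ?thesis
      using power_less_imp_less_base by fastforce
  qed
  define ds where "ds = [a1, a2, a3, a4] @ replicate q (B - 1)"
  have ds: "\<forall>d \<in> set ds. d < B"
    unfolding ds_def using digit r assms by auto
  have "(\<Sum>d \<leftarrow> ds. d^2) = r + q * c"
    unfolding ds_def c_def by (simp add: sum_list_replicate r)
  then have preimage: "happyH B (horner_sum id B ds) = g"
    using happyH_horner_sum[OF assms ds] unfolding q_def r_def by simp
  have "length ds = q + 4"
    unfolding ds_def by simp
  then have below: "horner_sum id B ds < B ^ (q + 4)"
    using horner_sum_less_power[OF ds] by simp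
  show ?thesis
  proof (cases "horner_sum id B ds = 1")
    case True
    text \<open>The preimage \<open>1\<close> is excluded, but then \<open>g = 1\<close> is also the image of \<open>B\<close>.\<close>
    have "B < B ^ (q + 4)"
      using assms by (simp add: power_strict_increasing_iff[of B 1, simplified])
    moreover have "happyH B B = g"
      using preimage True happyH_1[OF assms] happyH_base[OF assms] by simp
    ultimately show ?thesis
      using assms unfolding q_def c_def by (intro exI[of _ B]) simp
  next
    case False
    then show ?thesis
      using preimage below unfolding q_def c_def by blast
  qed
qed

lemma exists_happy_height:
  assumes "B \<ge> 2"
  shows "\<exists>x. happy B x \<and> height B x = n"
proof (induction n)
  case 0
  have "happy B 1"
    unfolding happy_def by (auto intro: exI[of _ 0])
  moreover have "height B 1 = 0"
    unfolding height_def by (rule Least_eq_0) simp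
  ultimately show ?case by blast
next
  case (Suc n)
  then obtain y where "happy B y" "height B y = n" by blast
  moreover obtain z where "z \<noteq> 1" "happyH B z = y"
    using exists_happyH_preimage[OF assms] by blast
  ultimately show ?case
    using happy_height_Suc_of_happyH_eq by blast
qed

lemma gamma_happy_height:
  assumes "B \<ge> 2"
  shows "happy B (gamma B n) \<and> height B (gamma B n) = n"
proof -
  have "\<exists>x. x \<ge> 1 \<and> happy B x \<and> height B x = n"
    using exists_happy_height[OF assms] unfolding happy_def by (auto simp: Suc_le_eq)
  then show ?thesis
    unfolding gamma_def by (metis (mono_tags, lifting) LeastI_ex)
qed

lemma gamma_Suc_le:
  assumes "B \<ge> 2" "happyH B z = gamma B n" "z \<noteq> 1"
  shows "gamma B (Suc n) \<le> z"
proof -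
  have "happy B z \<and> height B z = Suc n"
    using happy_height_Suc_of_happyH_eq gamma_happy_height[OF assms(1)] assms(2,3) by blast
  then show ?thesis
    unfolding gamma_def happy_def by (intro Least_le) auto
qed

theorem lemma2p6:
  fixes B \<eta> :: nat
  assumes "B \<ge> 2"
  shows "happyH B (gamma B (\<eta> + 1)) \<le> gamma B \<eta> + 4 * (B - 1)^2"
proof -
  define x g c where "x = gamma B (\<eta> + 1)" and "g = gamma B \<eta>" and "c = (B - 1)^2"
  obtain z where z: "z \<noteq> 1" "happyH B z = g" "z < B ^ (g div c + 4)"
    using exists_happyH_preimage[OF assms] unfolding c_def by blast
  have "x \<le> z"
    using gamma_Suc_le[OF assms] z unfolding x_def g_def by simp
  have "x \<ge> 1"
    using gamma_happy_height[OF assms] unfolding x_def happy_def by (simp add: Suc_le_eq)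
  then obtain L where L: "B ^ L \<le> x" "x < B ^ (L + 1)"
    using ex_power_ivl1[OF assms] by blast
  have "B ^ L < B ^ (g div c + 4)"
    using L(1) \<open>x \<le> z\<close> z(3) by linarith
  then have "L + 1 \<le> g div c + 4"
    using assms power_less_imp_less_exp by fastforce
  have "happyH B x \<le> (L + 1) * c"
    using happyH_le_of_less_power[OF assms L(2)] unfolding c_def .
  also have "\<dots> \<le> (g div c + 4) * c"
    using \<open>L + 1 \<le> g div c + 4\<close> by (rule mult_right_mono) simp
  also have "\<dots> \<le> g + 4 * c"
    by (simp add: add_mult_distrib)
  finally show ?thesis
    unfolding x_def g_def c_def by simp
qed

end
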